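(* Let $(S,V)$ be a complete semiring-semimodule pair, let $S'\subseteq S$ contain $0$ and $1$, let $n\ge1$, let $\Gamma$ be an alphabet, and let $M\in (S'^{n\times n})^{\Gamma^*\times\Gamma^*}$ be a pushdown transition matrix. Then for all $0\le l\le n$, the pair of families $\big(((M^* )_{p,\epsilon})_{p\in\Gamma},((M^{\omega,l})_p)_{p\in\Gamma}\big)$ is a solution of the algebraic system $$y_p=\sum_{\pi\in\Gamma^*}M_{p,\pi}\,y_\pi,\qquad p\in\Gamma,$$ over the quemiring $S^{n\times n}\times V^n$; that is, setting $x_p=(M^* )_{p,\epsilon}$ and $z_p=(M^{\omega,l})_p$, for all $p\in\Gamma$: $$x_p=\sum_{\pi\in\Gamma^*}M_{p,\pi}x_\pi\quad\text{and}\quad z_p=\sum_{\pi=p_1\dots p_k\in\Gamma^+}M_{p,\pi}\sum_{1\le j\le k}x_{p_1}\cdots x_{p_{j-1}}z_{p_j},$$ where $x_{p_1\dots p_k}=x_{p_1}\cdots x_{p_k}$ and $x_\epsilon$ is the $n\times n$ identity matrix.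
   Context: A complete semiring-semimodule pair $(S,V)$ (in the sense of Ésik and Kuich, "Modern Automata Theory") consists of a complete starsemiring $S$ (arbitrary sums with infinite associativity/commutativity/distributivity laws, star $s^*=\sum_{j\ge0}s^j$) and a complete $S$-semimodule $V$, with infinite products $\prod_{j\ge1}s_j\in V$ of sequences in $S$ satisfying the axioms of that framework; then $(S^{n\times n},V^n)$ is again such a pair. The quemiring $S^{n\times n}\times V^n$ has componentwise sum and product $(s,u)(s',u')=(ss',u+su')$; in the system, $y_p=(x_p,z_p)$ and $y_{p_1\dots p_k}=y_{p_1}\cdots y_{p_k}$ (quemiring product), $y_\epsilon=(E,0)$, and a matrix $A\in S^{n\times n}$ acts by $A(s,u)=(As,Au)$; the two displayed equations are exactly the componentwise form of the system. $M\in (S'^{n\times n})^{\Gamma^*\times\Gamma^*}$ is a $\Gamma^*\times\Gamma^*$ matrix with $n\times n$ blocks over $S'$; it is a pushdown transition matrix if (i) for each $p\in\Gamma$ only finitely many blocks $M_{p,\pi}$ are nonzero, and (ii) $M_{\pi_1,\pi_2}=M_{p,\pi}$ if $\pi_1=p\pi'$, $\pi_2=\pi\pi'$ for some $p\in\Gamma$, $\pi,\pi'\in\Gamma^*$, and $0$ otherwise. $M^*=\sum_{m\ge0}M^m$ with blocks $(M^* )_{\pi,\pi'}$. Let $P_l=\{(j_1,j_2,\dots)\in\{1,\dots,n\}^\omega\mid j_t\le l\text{ for infinitely many }t\}$; $M^{\omega,l}\in (V^n)^{\Gamma^*}$ is given by $((M^{\omega,l})_\pi)_i=\sum_{\pi_1,\pi_2,\ldots\in\Gamma^*}\sum_{(j_1,j_2,\ldots)\in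 P_l}(M_{\pi,\pi_1})_{i,j_1}(M_{\pi_1,\pi_2})_{j_1,j_2}\cdots$. *)

theory Defs
  imports Main
begin

text \<open>Universal index type for complete sums. Families indexed by sets of
  any other type are summed by transporting them injectively into this type
  (see Sum_over); by the partition axiom the result does not depend on the
  chosen injection.\<close>
type_synonym idx = "nat \<Rightarrow> nat"

definition Sum_over :: "(idx set \<Rightarrow> (idx \<Rightarrow> 'a) \<Rightarrow> 'a) \<Rightarrow> 'x set \<Rightarrow> ('x \<Rightarrow> 'a) \<Rightarrow> 'a" where
  "Sum_over \<sigma> A f =
     (let h = (SOME h :: 'x \<Rightarrow> idx. inj_on h A) in \<sigma> (h ` A) (\<lambda>i. f (inv_into A h i)))"

definition complete_monoid_sum :: "(idx set \<Rightarrow> (idx \<Rightarrow> 'a::comm_monoid_add) \<Rightarrow> 'a) \<Rightarrow> bool" where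
  "complete_monoid_sum \<sigma> \<longleftrightarrow>
     (\<forall>f. \<sigma> {} f = 0) \<and>
     (\<forall>f j. \<sigma> {j} f = f j) \<and>
     (\<forall>f j k. j \<noteq> k \<longrightarrow> \<sigma> {j, k} f = f j + f k) \<and>
     (\<forall>I f g. (\<forall>i\<in>I. f i = g i) \<longrightarrow> \<sigma> I f = \<sigma> I g) \<and>
     (\<forall>(J::idx set) (P::idx \<Rightarrow> idx set) f.
        (\<forall>j\<in>J. \<forall>j'\<in>J. j \<noteq> j' \<longrightarrow> P j \<inter> P j' = {}) \<longrightarrow>
        \<sigma> (\<Union>j\<in>J. P j) f = \<sigma> J (\<lambda>j. \<sigma> (P j) f))"

text \<open>Complete semiring-semimodule pair (S,V): ssum and vsum are the complete sums,
  smult the action of S on V, omega the infinite product of a sequence in S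
  (indexed from 0 instead of 1).\<close>
locale complete_ss_pair =
  fixes ssum :: "idx set \<Rightarrow> (idx \<Rightarrow> 's::semiring_1) \<Rightarrow> 's"
    and vsum :: "idx set \<Rightarrow> (idx \<Rightarrow> 'v::comm_monoid_add) \<Rightarrow> 'v"
    and smult :: "'s \<Rightarrow> 'v \<Rightarrow> 'v"
    and omega :: "(nat \<Rightarrow> 's) \<Rightarrow> 'v"
  assumes ssum_complete: "complete_monoid_sum ssum"
    and ssum_distl: "\<And>I a f. ssum I (\<lambda>i. a * f i) = a * ssum I f"
    and ssum_distr: "\<And>I a f. ssum I (\<lambda>i. f i * a) = ssum I f * a"
    and vsum_complete: "complete_monoid_sum vsum"
    and smult_add_left: "\<And>s s' v. smult (s + s') v = smult s v + smult s' v"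
    and smult_add_right: "\<And>s v v'. smult s (v + v') = smult s v + smult s v'"
    and smult_assoc: "\<And>s s' v. smult (s * s') v = smult s (smult s' v)"
    and smult_one: "\<And>v. smult 1 v = v"
    and smult_zero_left: "\<And>v. smult 0 v = 0"
    and smult_zero_right: "\<And>s. smult s 0 = 0"
    and smult_vsum: "\<And>s I f. smult s (vsum I f) = vsum I (\<lambda>i. smult s (f i))"
    and smult_ssum: "\<And>I f v. smult (ssum I f) v = vsum I (\<lambda>i. smult (f i) v)"
    and omega_unfold: "\<And>s. omega s = smult (s 0) (omega (\<lambda>j. s (Suc j)))"
    and omega_group: "\<And>s k. strict_mono k \<Longrightarrow> k 0 = 0 \<Longrightarrow>
         omega s = omega (\<lambda>j. prod_list (map s [k j..<k (Suc j)]))"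
    and omega_sum: "\<And>(I::nat \<Rightarrow> idx set) (a::nat \<Rightarrow> idx \<Rightarrow> 's).
         omega (\<lambda>j. ssum (I j) (a j)) =
         Sum_over vsum {f. \<forall>j. f j \<in> I j} (\<lambda>f. omega (\<lambda>j. a j (f j)))"

text \<open>n x n matrices over S as functions nat => nat => S, indices 0..n-1.\<close>
definition mat_mult :: "nat \<Rightarrow> (nat \<Rightarrow> nat \<Rightarrow> 's::semiring_1) \<Rightarrow> (nat \<Rightarrow> nat \<Rightarrow> 's) \<Rightarrow> nat \<Rightarrow> nat \<Rightarrow> 's" where
  "mat_mult n A B = (\<lambda>i j. \<Sum>k<n. A i k * B k j)"

definition mat_one :: "nat \<Rightarrow> nat \<Rightarrow> nat \<Rightarrow> 's::semiring_1" where
  "mat_one n = (\<lambda>i j. if i = j then 1 else 0)"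

definition mat_listprod :: "nat \<Rightarrow> (nat \<Rightarrow> nat \<Rightarrow> 's::semiring_1) list \<Rightarrow> nat \<Rightarrow> nat \<Rightarrow> 's" where
  "mat_listprod n As = foldr (mat_mult n) As (mat_one n)"

definition mat_vec :: "('s \<Rightarrow> 'v \<Rightarrow> 'v) \<Rightarrow> nat \<Rightarrow> (nat \<Rightarrow> nat \<Rightarrow> 's) \<Rightarrow> (nat \<Rightarrow> 'v::comm_monoid_add) \<Rightarrow> nat \<Rightarrow> 'v" where
  "mat_vec smult n A u = (\<lambda>i. \<Sum>k<n. smult (A i k) (u k))"

text \<open>Gamma^* x Gamma^* matrices with n x n blocks.\<close>
type_synonym ('g, 's) bmat = "'g list \<Rightarrow> 'g list \<Rightarrow> nat \<Rightarrow> nat \<Rightarrow> 's"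

definition bmat_mult :: "(idx set \<Rightarrow> (idx \<Rightarrow> 's::semiring_1) \<Rightarrow> 's) \<Rightarrow> nat \<Rightarrow> ('g, 's) bmat \<Rightarrow> ('g, 's) bmat \<Rightarrow> ('g, 's) bmat" where
  "bmat_mult ssum n A B = (\<lambda>\<pi>1 \<pi>2 i j. Sum_over ssum UNIV (\<lambda>\<pi>. \<Sum>k<n. A \<pi>1 \<pi> i k * B \<pi> \<pi>2 k j))"

definition bmat_one :: "('g, 's::semiring_1) bmat" where
  "bmat_one = (\<lambda>\<pi>1 \<pi>2 i j. if \<pi>1 = \<pi>2 \<and> i = j then 1 else 0)"

fun bmat_pow :: "(idx set \<Rightarrow> (idx \<Rightarrow> 's::semiring_1) \<Rightarrow> 's) \<Rightarrow> nat \<Rightarrow> ('g, 's) bmat \<Rightarrow> nat \<Rightarrow> ('g, 's) bmat" where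
  "bmat_pow ssum n M 0 = bmat_one"
| "bmat_pow ssum n M (Suc m) = bmat_mult ssum n (bmat_pow ssum n M m) M"

definition bmat_star :: "(idx set \<Rightarrow> (idx \<Rightarrow> 's::semiring_1) \<Rightarrow> 's) \<Rightarrow> nat \<Rightarrow> ('g, 's) bmat \<Rightarrow> ('g, 's) bmat" where
  "bmat_star ssum n M = (\<lambda>\<pi>1 \<pi>2 i j. Sum_over ssum UNIV (\<lambda>m::nat. bmat_pow ssum n M m \<pi>1 \<pi>2 i j))"

text \<open>P_l with 0-based state indices: j_t \<le> l (1-based) becomes j_t < l (0-based).\<close>
definition Pl :: "nat \<Rightarrow> nat \<Rightarrow> (nat \<Rightarrow> nat) set" where
  "Pl n l = {js. (\<forall>t. js t < n) \<and> infinite {t. js t < l}}"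

definition bmat_omega :: "(idx set \<Rightarrow> (idx \<Rightarrow> 'v::comm_monoid_add) \<Rightarrow> 'v) \<Rightarrow> ((nat \<Rightarrow> 's) \<Rightarrow> 'v)
    \<Rightarrow> nat \<Rightarrow> nat \<Rightarrow> ('g, 's) bmat \<Rightarrow> 'g list \<Rightarrow> nat \<Rightarrow> 'v" where
  "bmat_omega vsum omega n l M = (\<lambda>\<pi> i.
     Sum_over vsum UNIV (\<lambda>\<pi>s :: nat \<Rightarrow> 'g list.
       Sum_over vsum (Pl n l) (\<lambda>js.
         omega (\<lambda>t. M (case_nat \<pi> \<pi>s t) (\<pi>s t) (case_nat i js t) (js t)))))"

definition pushdown_tm :: "nat \<Rightarrow> ('g, 's::zero) bmat \<Rightarrow> bool" where
  "pushdown_tm n M \<longleftrightarrow>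
     (\<forall>p. finite {\<pi>. \<exists>i<n. \<exists>j<n. M [p] \<pi> i j \<noteq> 0}) \<and>
     (\<forall>p \<pi> \<pi>' i j. i < n \<longrightarrow> j < n \<longrightarrow> M (p # \<pi>') (\<pi> @ \<pi>') i j = M [p] \<pi> i j) \<and>
     (\<forall>\<pi>1 \<pi>2 i j. i < n \<longrightarrow> j < n \<longrightarrow> \<not> (\<exists>p \<pi> \<pi>'. \<pi>1 = p # \<pi>' \<and> \<pi>2 = \<pi> @ \<pi>') \<longrightarrow>
        M \<pi>1 \<pi>2 i j = 0)"

end

theory Submission
  imports Defs "HOL-Library.Countable_Set"
begin

(* The x-equations unroll M^* = E + M M^* by one step.  Because M is a pushdown transition
   matrix, a computation emptying the stack p_1 ... p_k must first empty p_1 while p_2 ... p_k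
   stays untouched, then p_2, and so on; hence the block of M^* at (p_1 ... p_k, eps) is the
   product x_{p_1} ... x_{p_k}.

   For the z-equations, an infinite run from p_1 ... p_k is split according to the first time its
   stack is p_2 ... p_k: if this happens after m+1 steps, the run is a finite computation emptying
   p_1 (weighted by M^{m+1}) followed by an infinite run from p_2 ... p_k; if it never happens, the
   run is the lift of an infinite run from p_1 that never empties its stack (runs emptying the
   stack have weight 0 since the rows of M at eps vanish).  Summing over m gives, with z_pi the
   block of M^(omega,l) at pi, z_{p_1...p_k} = z_{p_1} + x_{p_1} z_{p_2...p_k}; iterating this and
   unrolling the first transition yields the z-equations. *)

section \<open>Complete sums over arbitrary index sets\<close>

text \<open>Sum_over is only meaningful on indexable sets: on other sets the SOME in its definition
  picks a map that is not injective.\<close>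

definition indexable :: "'x set \<Rightarrow> bool" where
  "indexable A \<longleftrightarrow> (\<exists>h::'x \<Rightarrow> idx. inj_on h A)"

lemma indexable_subset: "indexable A \<Longrightarrow> B \<subseteq> A \<Longrightarrow> indexable B"
  unfolding indexable_def by (meson inj_on_subset)

lemma indexable_countable: "countable A \<Longrightarrow> indexable A"
  unfolding indexable_def
  by (rule exI[of _ "\<lambda>x k. to_nat_on A x"]) (auto simp: inj_on_def dest: fun_cong)

lemma indexable_countable_type [simp]: "indexable (A :: 'a::countable set)"
  by (simp add: indexable_countable)

lemma indexable_sequences [simp]: "indexable (A :: (nat \<Rightarrow> 'a::countable) set)"
  unfolding indexable_def
  by (rule exI[of _ "\<lambda>f k. to_nat (f k)"]) (auto simp: inj_on_def fun_eq_iff)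

lemma indexable_sequence_pairs [simp]:
  "indexable (A :: ((nat \<Rightarrow> 'a::countable) \<times> (nat \<Rightarrow> 'b::countable)) set)"
  unfolding indexable_def
  by (rule exI[of _ "\<lambda>x k. to_nat (fst x k, snd x k)"]) (auto simp: inj_on_def fun_eq_iff prod_eq_iff)

lemma indexable_inj_on_image: "indexable (g ` A) \<Longrightarrow> inj_on g A \<Longrightarrow> indexable A"
  unfolding indexable_def by (metis comp_inj_on)

lemma indexable_Times: "indexable A \<Longrightarrow> indexable B \<Longrightarrow> indexable (A \<times> B)"
proof -
  assume "indexable A" "indexable B"
  then obtain ha hb where ha: "inj_on (ha::_ \<Rightarrow> idx) A" and hb: "inj_on (hb::_ \<Rightarrow> idx) B"
    unfolding indexable_def by blast
  let ?h = "\<lambda>(a, b) (k::nat). if even k then ha a (k div 2) else hb b (k div 2)"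
  have "inj_on ?h (A \<times> B)"
  proof (rule inj_onI, clarsimp)
    fix a b a' b' assume in_AB: "a \<in> A" "b \<in> B" "a' \<in> A" "b' \<in> B"
      and eq: "(\<lambda>k::nat. if even k then ha a (k div 2) else hb b (k div 2)) =
               (\<lambda>k. if even k then ha a' (k div 2) else hb b' (k div 2))"
    have "ha a = ha a'" using fun_cong[OF eq, of "2 * _"] by (intro ext) simp
    moreover have "hb b = hb b'" using fun_cong[OF eq, of "2 * _ + 1"] by (intro ext) simp
    ultimately show "a = a' \<and> b = b'" using ha hb in_AB by (auto dest: inj_onD)
  qed
  then show ?thesis unfolding indexable_def by blast
qed

locale complete_sum =
  fixes \<sigma> :: "idx set \<Rightarrow> (idx \<Rightarrow> 'a::comm_monoid_add) \<Rightarrow> 'a"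
  assumes complete: "complete_monoid_sum \<sigma>"
begin

lemmas sigma_axioms = complete[unfolded complete_monoid_sum_def]

lemma sigma_empty: "\<sigma> {} f = 0"
  using conjunct1[OF sigma_axioms] by blast

lemma sigma_singleton: "\<sigma> {j} f = f j"
  using conjunct1[OF conjunct2[OF sigma_axioms]] by blast

lemma sigma_doubleton: "j \<noteq> k \<Longrightarrow> \<sigma> {j, k} f = f j + f k"
  using conjunct1[OF conjunct2[OF conjunct2[OF sigma_axioms]]] by blast

lemma sigma_cong: "(\<And>i. i \<in> I \<Longrightarrow> f i = g i) \<Longrightarrow> \<sigma> I f = \<sigma> I g"
  using conjunct1[OF conjunct2[OF conjunct2[OF conjunct2[OF sigma_axioms]]]] by blast

lemma sigma_UN_disjoint:
  "(\<And>j j'. j \<in> J \<Longrightarrow> j' \<in> J \<Longrightarrow> j \<noteq> j' \<Longrightarrow> P j \<inter> P j' = {}) \<Longrightarrow>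
   \<sigma> (\<Union>j\<in>J. P j) f = \<sigma> J (\<lambda>j. \<sigma> (P j) f)"
  using conjunct2[OF conjunct2[OF conjunct2[OF conjunct2[OF sigma_axioms]]]] by blast

lemma sigma_zero: "\<sigma> J (\<lambda>_. 0) = 0"
  using sigma_UN_disjoint[of J "\<lambda>_. {}" "\<lambda>_. 0"] by (simp add: sigma_empty)

lemma sigma_inj_image_independent:
  assumes h1: "inj_on h1 A" and h2: "inj_on h2 A"
  shows "\<sigma> (h1 ` A) (\<lambda>i. f (inv_into A h1 i)) = \<sigma> (h2 ` A) (\<lambda>i. f (inv_into A h2 i))"
proof -
  have image_h2: "h2 ` A = (\<Union>j\<in>h1 ` A. {h2 (inv_into A h1 j)})"
    using h1 by auto
  have "\<sigma> (h2 ` A) (\<lambda>i. f (inv_into A h2 i))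
      = \<sigma> (h1 ` A) (\<lambda>j. \<sigma> {h2 (inv_into A h1 j)} (\<lambda>i. f (inv_into A h2 i)))"
    unfolding image_h2
    by (rule sigma_UN_disjoint) (use h1 h2 in \<open>auto simp: inv_into_into dest: inj_onD\<close>)
  also have "\<dots> = \<sigma> (h1 ` A) (\<lambda>i. f (inv_into A h1 i))"
    by (rule sigma_cong) (auto simp: sigma_singleton h1 h2 inv_into_into)
  finally show ?thesis by simp
qed

lemma Sum_over_eq: "inj_on h A \<Longrightarrow> Sum_over \<sigma> A f = \<sigma> (h ` A) (\<lambda>i. f (inv_into A h i))"
  unfolding Sum_over_def Let_def
  by (rule sigma_inj_image_independent) (auto intro: someI[where P = "\<lambda>h. inj_on h A"])

lemma Sum_over_eq_subset:
  assumes "inj_on h A" "B \<subseteq> A"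
  shows "Sum_over \<sigma> B f = \<sigma> (h ` B) (\<lambda>i. f (inv_into A h i))"
proof -
  have hB: "inj_on h B" using assms by (rule inj_on_subset)
  have "\<sigma> (h ` B) (\<lambda>i. f (inv_into B h i)) = \<sigma> (h ` B) (\<lambda>i. f (inv_into A h i))"
    using assms by (intro sigma_cong) (auto simp: inv_into_f_f hB)
  then show ?thesis by (simp add: Sum_over_eq[OF hB])
qed

lemma Sum_over_cong: "(\<And>x. x \<in> A \<Longrightarrow> f x = g x) \<Longrightarrow> Sum_over \<sigma> A f = Sum_over \<sigma> A g"
  unfolding Sum_over_def Let_def by (rule sigma_cong) (simp add: inv_into_into)

lemma Sum_over_zero [simp]: "Sum_over \<sigma> A (\<lambda>_. 0) = 0"
  unfolding Sum_over_def Let_def by (rule sigma_zero)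

lemma Sum_over_empty [simp]: "Sum_over \<sigma> {} f = 0"
  unfolding Sum_over_def Let_def by (simp add: sigma_empty)

lemma Sum_over_singleton [simp]: "Sum_over \<sigma> {a} f = f a"
proof -
  have inj: "inj_on (\<lambda>_ _. 0::nat) {a}" by simp
  show ?thesis
    by (simp only: Sum_over_eq[OF inj] image_insert image_empty sigma_singleton
        inv_into_f_f[OF inj singletonI])
qed

lemma Sum_over_doubleton:
  assumes "a \<noteq> b"
  shows "Sum_over \<sigma> {a, b} f = f a + f b"
proof -
  let ?h = "\<lambda>x (_::nat). if x = a then 0 else (1::nat)"
  have inj: "inj_on ?h {a, b}" using assms by (auto simp: inj_on_def dest: fun_cong)
  have distinct: "?h a \<noteq> ?h b" using assms by (auto dest: fun_cong)
  have inv: "inv_into {a, b} ?h (?h a) = a" "inv_into {a, b} ?h (?h b) = b"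
    by (rule inv_into_f_f[OF inj], simp)+
  have "Sum_over \<sigma> {a, b} f = \<sigma> {?h a, ?h b} (\<lambda>i. f (inv_into {a, b} ?h i))"
    using Sum_over_eq[OF inj, of f] by simp
  also have "\<dots> = f a + f b"
    by (simp only: sigma_doubleton[OF distinct] inv)
  finally show ?thesis .
qed

lemma Sum_over_UNIV_bool: "Sum_over \<sigma> (UNIV::bool set) g = g True + g False"
  using Sum_over_doubleton[of True False g] by (simp add: insert_commute UNIV_bool)

lemma Sum_over_reindex:
  assumes "indexable A" "inj_on g A"
  shows "Sum_over \<sigma> (g ` A) f = Sum_over \<sigma> A (\<lambda>x. f (g x))"
proof -
  obtain h where h: "inj_on (h::_ \<Rightarrow> idx) A" using assms(1) unfolding indexable_def by blast
  let ?h = "h \<circ> inv_into A g"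
  have inj: "inj_on ?h (g ` A)"
    using h assms(2) by (auto simp: inj_on_def inv_into_into)
  have image: "?h ` g ` A = h ` A" using assms(2) by (force simp: image_comp)
  have "Sum_over \<sigma> (g ` A) f = \<sigma> (?h ` g ` A) (\<lambda>i. f (inv_into (g ` A) ?h i))"
    by (rule Sum_over_eq[OF inj])
  also have "\<dots> = \<sigma> (h ` A) (\<lambda>i. f (g (inv_into A h i)))"
    unfolding image
  proof (rule sigma_cong)
    fix i assume "i \<in> h ` A"
    then obtain a where a: "a \<in> A" "i = h a" by blast
    have "inv_into (g ` A) ?h i = g a"
      by (rule inv_into_f_eq[OF inj]) (use a assms(2) in auto)
    then show "f (inv_into (g ` A) ?h i) = f (g (inv_into A h i))" using a h by simp
  qed
  also have "\<dots> = Sum_over \<sigma> A (\<lambda>x. f (g x))" by (rule Sum_over_eq[OF h, symmetric])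
  finally show ?thesis .
qed

lemma Sum_over_reindex_bij:
  "indexable A \<Longrightarrow> bij_betw g A B \<Longrightarrow> Sum_over \<sigma> B f = Sum_over \<sigma> A (\<lambda>x. f (g x))"
  using Sum_over_reindex[of A g f] by (simp add: bij_betw_def)

lemma Sum_over_UN_disjoint:
  assumes "indexable (\<Union>j\<in>J. B j)" "indexable J"
    and disjoint: "\<And>j j'. j \<in> J \<Longrightarrow> j' \<in> J \<Longrightarrow> j \<noteq> j' \<Longrightarrow> B j \<inter> B j' = {}"
  shows "Sum_over \<sigma> (\<Union>j\<in>J. B j) f = Sum_over \<sigma> J (\<lambda>j. Sum_over \<sigma> (B j) f)"
proof -
  let ?A = "\<Union>j\<in>J. B j"
  obtain h where h: "inj_on (h::_ \<Rightarrow> idx) ?A" using assms(1) unfolding indexable_def by blast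
  obtain g where g: "inj_on (g::_ \<Rightarrow> idx) J" using assms(2) unfolding indexable_def by blast
  have image: "h ` ?A = (\<Union>k\<in>g ` J. h ` B (inv_into J g k))" using g by auto
  have "Sum_over \<sigma> ?A f = \<sigma> (h ` ?A) (\<lambda>i. f (inv_into ?A h i))" by (rule Sum_over_eq[OF h])
  also have "\<dots> = \<sigma> (g ` J) (\<lambda>k. \<sigma> (h ` B (inv_into J g k)) (\<lambda>i. f (inv_into ?A h i)))"
    unfolding image
  proof (rule sigma_UN_disjoint)
    fix k k' assume "k \<in> g ` J" "k' \<in> g ` J" "k \<noteq> k'"
    then obtain j j' where jj': "j \<in> J" "j' \<in> J" "k = g j" "k' = g j'" "j \<noteq> j'" by blast
    then have "B j \<inter> B j' = {}" "inv_into J g k = j" "inv_into J g k' = j'"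
      using disjoint g by auto
    moreover have "B j \<subseteq> ?A" "B j' \<subseteq> ?A" using jj' by auto
    ultimately show "h ` B (inv_into J g k) \<inter> h ` B (inv_into J g k') = {}"
      using h by (auto dest: inj_onD)
  qed
  also have "\<dots> = \<sigma> (g ` J) (\<lambda>k. Sum_over \<sigma> (B (inv_into J g k)) f)"
  proof (rule sigma_cong)
    fix k assume "k \<in> g ` J"
    then have "B (inv_into J g k) \<subseteq> ?A" by (intro UN_upper inv_into_into)
    then show "\<sigma> (h ` B (inv_into J g k)) (\<lambda>i. f (inv_into ?A h i)) = Sum_over \<sigma> (B (inv_into J g k)) f"
      by (rule Sum_over_eq_subset[OF h, symmetric])
  qed
  also have "\<dots> = Sum_over \<sigma> J (\<lambda>j. Sum_over \<sigma> (B j) f)" by (rule Sum_over_eq[OF g, symmetric])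
  finally show ?thesis .
qed

lemma Sum_over_Int_Diff:
  assumes "indexable A"
  shows "Sum_over \<sigma> A f = Sum_over \<sigma> (A \<inter> C) f + Sum_over \<sigma> (A - C) f"
proof -
  have split: "A = (\<Union>b\<in>UNIV. if b then A \<inter> C else A - C)" by auto
  have "Sum_over \<sigma> A f = Sum_over \<sigma> (\<Union>b\<in>UNIV. if b then A \<inter> C else A - C) f"
    using split by simp
  also have "\<dots> = Sum_over \<sigma> UNIV (\<lambda>b. Sum_over \<sigma> (if b then A \<inter> C else A - C) f)"
    by (rule Sum_over_UN_disjoint) (use assms split in auto)
  finally show ?thesis by (simp add: Sum_over_UNIV_bool)
qed

lemma Sum_over_mono_neutral:
  assumes "indexable A" "B \<subseteq> A" "\<And>x. x \<in> A \<Longrightarrow> x \<notin> B \<Longrightarrow> f x = 0"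
  shows "Sum_over \<sigma> A f = Sum_over \<sigma> B f"
proof -
  have "Sum_over \<sigma> (A - B) f = 0"
    using Sum_over_cong[of "A - B" f "\<lambda>_. 0"] assms(3) by simp
  moreover have "A \<inter> B = B" using assms(2) by auto
  ultimately show ?thesis using Sum_over_Int_Diff[OF assms(1), of f B] by simp
qed

lemma Sum_over_finite: "finite A \<Longrightarrow> Sum_over \<sigma> A f = sum f A"
proof (induction A rule: finite_induct)
  case (insert x F)
  have "indexable (insert x F)" using insert by (simp add: indexable_countable countable_finite)
  then have "Sum_over \<sigma> (insert x F) f
      = Sum_over \<sigma> (insert x F \<inter> {x}) f + Sum_over \<sigma> (insert x F - {x}) f"
    by (rule Sum_over_Int_Diff)
  also have "insert x F \<inter> {x} = {x}" by auto
  also have "insert x F - {x} = F" using insert by auto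
  finally show ?case using insert by simp
qed simp

lemma Sum_over_Sigma:
  assumes "indexable (Sigma A B)" "indexable A"
  shows "Sum_over \<sigma> (Sigma A B) f = Sum_over \<sigma> A (\<lambda>a. Sum_over \<sigma> (B a) (\<lambda>b. f (a, b)))"
proof -
  have Sigma_UN: "Sigma A B = (\<Union>a\<in>A. Pair a ` B a)" by auto
  have "Sum_over \<sigma> (Sigma A B) f = Sum_over \<sigma> A (\<lambda>a. Sum_over \<sigma> (Pair a ` B a) f)"
    unfolding Sigma_UN by (rule Sum_over_UN_disjoint) (use assms Sigma_UN in auto)
  also have "\<dots> = Sum_over \<sigma> A (\<lambda>a. Sum_over \<sigma> (B a) (\<lambda>b. f (a, b)))"
  proof (rule Sum_over_cong)
    fix a assume "a \<in> A"
    then have "indexable (Pair a ` B a)" using assms(1) by (rule_tac indexable_subset) auto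
    then have "indexable (B a)" by (rule indexable_inj_on_image) (simp add: inj_on_def)
    then show "Sum_over \<sigma> (Pair a ` B a) f = Sum_over \<sigma> (B a) (\<lambda>b. f (a, b))"
      by (rule Sum_over_reindex) (simp add: inj_on_def)
  qed
  finally show ?thesis .
qed

lemma Sum_over_swap:
  assumes "indexable A" "indexable B"
  shows "Sum_over \<sigma> A (\<lambda>a. Sum_over \<sigma> B (f a)) = Sum_over \<sigma> B (\<lambda>b. Sum_over \<sigma> A (\<lambda>a. f a b))"
proof -
  have AB: "indexable (A \<times> B)" and BA: "indexable (B \<times> A)"
    using assms by (auto intro: indexable_Times)
  have swap: "bij_betw prod.swap (B \<times> A) (A \<times> B)" by (auto simp: bij_betw_def)
  have "Sum_over \<sigma> A (\<lambda>a. Sum_over \<sigma> B (f a)) = Sum_over \<sigma> (A \<times> B) (\<lambda>(a, b). f a b)"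
    using Sum_over_Sigma[OF AB assms(1)] by simp
  also have "\<dots> = Sum_over \<sigma> (B \<times> A) (\<lambda>(b, a). f a b)"
    by (subst Sum_over_reindex_bij[OF BA swap]) (auto intro: Sum_over_cong)
  also have "\<dots> = Sum_over \<sigma> B (\<lambda>b. Sum_over \<sigma> A (\<lambda>a. f a b))"
    using Sum_over_Sigma[OF BA assms(2)] by simp
  finally show ?thesis .
qed

lemma Sum_over_add:
  assumes "indexable A"
  shows "Sum_over \<sigma> A (\<lambda>x. f x + g x) = Sum_over \<sigma> A f + Sum_over \<sigma> A g"
proof -
  let ?F = "\<lambda>(b::bool) x. if b then f x else g x"
  have "Sum_over \<sigma> A (\<lambda>x. f x + g x) = Sum_over \<sigma> A (\<lambda>x. Sum_over \<sigma> UNIV (\<lambda>b. ?F b x))"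
    by (simp add: Sum_over_UNIV_bool)
  also have "\<dots> = Sum_over \<sigma> UNIV (\<lambda>b. Sum_over \<sigma> A (?F b))"
    by (rule Sum_over_swap) (simp_all add: assms)
  finally show ?thesis by (simp add: Sum_over_UNIV_bool)
qed

lemma Sum_over_sum:
  "finite K \<Longrightarrow> indexable A \<Longrightarrow>
   Sum_over \<sigma> A (\<lambda>x. \<Sum>k\<in>K. f k x) = (\<Sum>k\<in>K. Sum_over \<sigma> A (f k))"
  by (induction K rule: finite_induct) (simp_all add: Sum_over_add)

lemma Sum_over_nat_shift:
  "Sum_over \<sigma> (UNIV::nat set) f = f 0 + Sum_over \<sigma> UNIV (\<lambda>m. f (Suc m))"
proof -
  have "UNIV - {0::nat} = range Suc" by (auto simp: image_iff) (metis not0_implies_Suc)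
  then have "Sum_over \<sigma> (UNIV - {0}) f = Sum_over \<sigma> UNIV (\<lambda>m. f (Suc m))"
    by (simp add: Sum_over_reindex)
  then show ?thesis using Sum_over_Int_Diff[of "UNIV::nat set" f "{0}"] by simp
qed

lemma Sum_over_option:
  "Sum_over \<sigma> (UNIV :: 'b::countable option set) f = f None + Sum_over \<sigma> UNIV (\<lambda>m. f (Some m))"
proof -
  have "UNIV - {None} = range (Some :: 'b \<Rightarrow> _)"
    by (simp add: UNIV_option_conv Diff_insert_absorb image_iff)
  moreover have "Sum_over \<sigma> (range Some) f = Sum_over \<sigma> UNIV (\<lambda>m::'b. f (Some m))"
    by (rule Sum_over_reindex) simp_all
  ultimately show ?thesis using Sum_over_Int_Diff[of "UNIV :: 'b option set" f "{None}"] by simp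
qed

lemma Sum_over_diagonal:
  "Sum_over \<sigma> UNIV (\<lambda>m::nat. \<Sum>a\<le>m. f a (m - a)) = Sum_over \<sigma> UNIV (\<lambda>a. Sum_over \<sigma> UNIV (f a))"
proof -
  have bij: "bij_betw (\<lambda>(a, b). (a + b, a)) (UNIV \<times> UNIV) (SIGMA m:UNIV. {..m::nat})"
    unfolding bij_betw_def inj_on_def
    by (auto simp: image_iff) (metis le_add_diff_inverse)
  have "Sum_over \<sigma> UNIV (\<lambda>m::nat. \<Sum>a\<le>m. f a (m - a))
      = Sum_over \<sigma> UNIV (\<lambda>m::nat. Sum_over \<sigma> {..m} (\<lambda>a. f a (m - a)))"
    by (simp add: Sum_over_finite)
  also have "\<dots> = Sum_over \<sigma> (SIGMA m:UNIV. {..m}) (\<lambda>(m, a). f a (m - a))"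
    by (subst Sum_over_Sigma) simp_all
  also have "\<dots> = Sum_over \<sigma> (UNIV \<times> UNIV) (\<lambda>(a, b). f a b)"
    by (subst Sum_over_reindex_bij[OF _ bij]) (auto intro: Sum_over_cong)
  also have "\<dots> = Sum_over \<sigma> UNIV (\<lambda>a. Sum_over \<sigma> UNIV (f a))"
    by (subst Sum_over_Sigma) simp_all
  finally show ?thesis .
qed

end

section \<open>Complete semiring-semimodule pairs and block matrices\<close>

sublocale complete_ss_pair \<subseteq> S: complete_sum ssum
  by (rule complete_sum.intro) (rule ssum_complete)

sublocale complete_ss_pair \<subseteq> V: complete_sum vsum
  by (rule complete_sum.intro) (rule vsum_complete)

context complete_ss_pair
begin

lemma Sum_over_mult_left: "a * Sum_over ssum A f = Sum_over ssum A (\<lambda>x. a * f x)"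
  unfolding Sum_over_def Let_def by (simp add: ssum_distl)

lemma Sum_over_mult_right: "Sum_over ssum A f * a = Sum_over ssum A (\<lambda>x. f x * a)"
  unfolding Sum_over_def Let_def by (simp add: ssum_distr)

lemma smult_Sum_over_right: "smult s (Sum_over vsum A f) = Sum_over vsum A (\<lambda>x. smult s (f x))"
  unfolding Sum_over_def Let_def by (simp add: smult_vsum)

lemma smult_Sum_over_left: "smult (Sum_over ssum A f) v = Sum_over vsum A (\<lambda>x. smult (f x) v)"
  unfolding Sum_over_def Let_def by (simp add: smult_ssum)

lemma smult_sum_left: "smult (\<Sum>k\<in>K. f k) v = (\<Sum>k\<in>K. smult (f k) v)"
  by (induction K rule: infinite_finite_induct) (auto simp: smult_zero_left smult_add_left)

lemma smult_sum_right: "smult s (\<Sum>k\<in>K. f k) = (\<Sum>k\<in>K. smult s (f k))"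
  by (induction K rule: infinite_finite_induct) (auto simp: smult_zero_right smult_add_right)

lemma omega_zero: "s t = 0 \<Longrightarrow> omega s = 0"
  by (induction t arbitrary: s) (subst omega_unfold, simp add: smult_zero_left smult_zero_right)+

lemma mat_vec_one:
  assumes "i < n"
  shows "mat_vec smult n (mat_one n) u i = u i"
proof -
  have "mat_vec smult n (mat_one n) u i = (\<Sum>k<n. if i = k then u k else 0)"
    unfolding mat_vec_def mat_one_def by (intro sum.cong refl) (simp add: smult_one smult_zero_left)
  then show ?thesis using assms by simp
qed

lemma mat_vec_mult:
  "mat_vec smult n (mat_mult n A B) u i = (\<Sum>k<n. smult (A i k) (mat_vec smult n B u k))"
proof -
  have "mat_vec smult n (mat_mult n A B) u i = (\<Sum>j<n. \<Sum>k<n. smult (A i k) (smult (B k j) (u j)))"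
    by (simp add: mat_vec_def mat_mult_def smult_sum_left smult_assoc)
  also have "\<dots> = (\<Sum>k<n. smult (A i k) (mat_vec smult n B u k))"
    by (subst sum.swap) (simp add: mat_vec_def smult_sum_right)
  finally show ?thesis .
qed

lemma Sum_over_vec_rearrange:
  fixes n :: nat
  assumes "indexable A"
  shows "Sum_over vsum A (\<lambda>\<tau>. \<Sum>k<n. smult (c \<tau> k) (\<Sum>k'<n. smult (d \<tau> k k') (v k')))
       = (\<Sum>k'<n. smult (Sum_over ssum A (\<lambda>\<tau>. \<Sum>k<n. c \<tau> k * d \<tau> k k')) (v k'))"
proof -
  have "(\<Sum>k<n. smult (c \<tau> k) (\<Sum>k'<n. smult (d \<tau> k k') (v k')))
      = (\<Sum>k'<n. \<Sum>k<n. smult (c \<tau> k * d \<tau> k k') (v k'))" for \<tau>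
    by (subst sum.swap) (simp add: smult_sum_right smult_assoc)
  then show ?thesis
    using assms by (simp add: V.Sum_over_sum smult_Sum_over_left smult_sum_left)
qed

lemma Sum_over_row_rearrange:
  fixes n :: nat
  assumes "indexable A" "finite B"
  shows "Sum_over ssum A (\<lambda>\<tau>. \<Sum>k<n. c \<tau> k * (\<Sum>a\<in>B. \<Sum>k'<n. d \<tau> a k k' * e a k'))
       = (\<Sum>a\<in>B. \<Sum>k'<n. Sum_over ssum A (\<lambda>\<tau>. \<Sum>k<n. c \<tau> k * d \<tau> a k k') * e a k')"
proof -
  let ?t = "\<lambda>\<tau> a k' k. c \<tau> k * d \<tau> a k k' * e a k'"
  have "(\<Sum>k<n. c \<tau> k * (\<Sum>a\<in>B. \<Sum>k'<n. d \<tau> a k k' * e a k'))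
      = (\<Sum>k<n. \<Sum>a\<in>B. \<Sum>k'<n. ?t \<tau> a k' k)" for \<tau>
    by (simp add: sum_distrib_left mult.assoc)
  also have "\<dots> \<tau> = (\<Sum>a\<in>B. \<Sum>k<n. \<Sum>k'<n. ?t \<tau> a k' k)" for \<tau>
    by (rule sum.swap)
  also have "\<dots> \<tau> = (\<Sum>a\<in>B. \<Sum>k'<n. \<Sum>k<n. ?t \<tau> a k' k)" for \<tau>
    by (intro sum.cong refl sum.swap)
  finally have "Sum_over ssum A (\<lambda>\<tau>. \<Sum>k<n. c \<tau> k * (\<Sum>a\<in>B. \<Sum>k'<n. d \<tau> a k k' * e a k'))
      = Sum_over ssum A (\<lambda>\<tau>. \<Sum>a\<in>B. \<Sum>k'<n. \<Sum>k<n. ?t \<tau> a k' k)"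
    by simp
  also have "\<dots> = (\<Sum>a\<in>B. \<Sum>k'<n. Sum_over ssum A (\<lambda>\<tau>. \<Sum>k<n. ?t \<tau> a k' k))"
    using assms by (simp add: S.Sum_over_sum)
  finally show ?thesis by (simp add: Sum_over_mult_right sum_distrib_right)
qed

lemma bmat_mult_eq:
  "bmat_mult ssum n A B \<pi>1 \<pi>2 i j = Sum_over ssum UNIV (\<lambda>\<pi>. \<Sum>k<n. A \<pi>1 \<pi> i k * B \<pi> \<pi>2 k j)"
  unfolding bmat_mult_def by simp

lemma bmat_mult_assoc:
  fixes A B C :: "('g::countable, 's) bmat"
  shows "bmat_mult ssum n (bmat_mult ssum n A B) C = bmat_mult ssum n A (bmat_mult ssum n B C)"
proof (intro ext)
  fix \<pi>1 \<pi>2 i j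
  let ?t = "\<lambda>\<pi> \<rho> k' k. A \<pi>1 \<pi> i k' * (B \<pi> \<rho> k' k * C \<rho> \<pi>2 k j)"
  have "bmat_mult ssum n (bmat_mult ssum n A B) C \<pi>1 \<pi>2 i j
      = Sum_over ssum UNIV (\<lambda>\<rho>. \<Sum>k<n. Sum_over ssum UNIV (\<lambda>\<pi>. \<Sum>k'<n. ?t \<pi> \<rho> k' k))"
    by (simp add: bmat_mult_eq Sum_over_mult_right sum_distrib_right mult.assoc)
  also have "\<dots> = Sum_over ssum UNIV (\<lambda>\<rho>. Sum_over ssum UNIV (\<lambda>\<pi>. \<Sum>k<n. \<Sum>k'<n. ?t \<pi> \<rho> k' k))"
    by (intro S.Sum_over_cong S.Sum_over_sum[symmetric]) simp_all
  also have "\<dots> = Sum_over ssum UNIV (\<lambda>\<pi>. Sum_over ssum UNIV (\<lambda>\<rho>. \<Sum>k'<n. \<Sum>k<n. ?t \<pi> \<rho> k' k))"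
    by (subst S.Sum_over_swap) (simp_all, intro S.Sum_over_cong sum.swap)
  also have "\<dots> = Sum_over ssum UNIV (\<lambda>\<pi>. \<Sum>k'<n. Sum_over ssum UNIV (\<lambda>\<rho>. \<Sum>k<n. ?t \<pi> \<rho> k' k))"
    by (intro S.Sum_over_cong S.Sum_over_sum) simp_all
  also have "\<dots> = bmat_mult ssum n A (bmat_mult ssum n B C) \<pi>1 \<pi>2 i j"
    by (simp add: bmat_mult_eq Sum_over_mult_left sum_distrib_left)
  finally show "bmat_mult ssum n (bmat_mult ssum n A B) C \<pi>1 \<pi>2 i j
      = bmat_mult ssum n A (bmat_mult ssum n B C) \<pi>1 \<pi>2 i j" .
qed

lemma bmat_mult_one_left:
  fixes A :: "('g::countable, 's) bmat"
  assumes "i < n"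
  shows "bmat_mult ssum n bmat_one A \<pi>1 \<pi>2 i j = A \<pi>1 \<pi>2 i j"
proof -
  have "bmat_mult ssum n bmat_one A \<pi>1 \<pi>2 i j
      = Sum_over ssum {\<pi>1} (\<lambda>\<pi>. \<Sum>k<n. bmat_one \<pi>1 \<pi> i k * A \<pi> \<pi>2 k j)"
    unfolding bmat_mult_eq by (rule S.Sum_over_mono_neutral) (auto simp: bmat_one_def)
  also have "\<dots> = A \<pi>1 \<pi>2 i j"
    using assms by (simp add: bmat_one_def if_distrib[of "\<lambda>x. x * _"] cong: if_cong)
  finally show ?thesis .
qed

lemma bmat_mult_one_right:
  fixes A :: "('g::countable, 's) bmat"
  assumes "j < n"
  shows "bmat_mult ssum n A bmat_one \<pi>1 \<pi>2 i j = A \<pi>1 \<pi>2 i j"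
proof -
  have "bmat_mult ssum n A bmat_one \<pi>1 \<pi>2 i j
      = Sum_over ssum {\<pi>2} (\<lambda>\<pi>. \<Sum>k<n. A \<pi>1 \<pi> i k * bmat_one \<pi> \<pi>2 k j)"
    unfolding bmat_mult_eq by (rule S.Sum_over_mono_neutral) (auto simp: bmat_one_def)
  also have "\<dots> = A \<pi>1 \<pi>2 i j"
    using assms by (simp add: bmat_one_def if_distrib[of "\<lambda>x. _ * x"] cong: if_cong)
  finally show ?thesis .
qed

lemma bmat_mult_row_cong:
  "(\<And>\<pi> k. k < n \<Longrightarrow> A \<pi>1 \<pi> i k = A' \<pi>1 \<pi> i k) \<Longrightarrow>
   bmat_mult ssum n A B \<pi>1 \<pi>2 i j = bmat_mult ssum n A' B \<pi>1 \<pi>2 i j"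
  unfolding bmat_mult_eq by (intro S.Sum_over_cong sum.cong) auto

lemma bmat_pow_Suc_left:
  fixes M :: "('g::countable, 's) bmat"
  assumes "i < n" "j < n"
  shows "bmat_pow ssum n M (Suc m) \<pi>1 \<pi>2 i j = bmat_mult ssum n M (bmat_pow ssum n M m) \<pi>1 \<pi>2 i j"
  using assms
proof (induction m arbitrary: \<pi>1 \<pi>2 i j)
  case 0
  then show ?case by (simp add: bmat_mult_one_left bmat_mult_one_right)
next
  case (Suc m)
  let ?P = "bmat_pow ssum n M"
  have "?P (Suc (Suc m)) \<pi>1 \<pi>2 i j = bmat_mult ssum n (?P (Suc m)) M \<pi>1 \<pi>2 i j"
    by (simp only: bmat_pow.simps)
  also have "\<dots> = bmat_mult ssum n (bmat_mult ssum n M (?P m)) M \<pi>1 \<pi>2 i j"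
    by (rule bmat_mult_row_cong) (use Suc in blast)
  also have "\<dots> = bmat_mult ssum n M (?P (Suc m)) \<pi>1 \<pi>2 i j"
    by (simp only: bmat_mult_assoc bmat_pow.simps)
  finally show ?case .
qed

end

section \<open>The star of a pushdown transition matrix\<close>

locale pushdown_matrix = complete_ss_pair ssum vsum smult omega
  for ssum :: "idx set \<Rightarrow> (idx \<Rightarrow> 's::semiring_1) \<Rightarrow> 's"
    and vsum :: "idx set \<Rightarrow> (idx \<Rightarrow> 'v::comm_monoid_add) \<Rightarrow> 'v"
    and smult :: "'s \<Rightarrow> 'v \<Rightarrow> 'v"
    and omega :: "(nat \<Rightarrow> 's) \<Rightarrow> 'v" +
  fixes n :: nat and M :: "('g::countable, 's) bmat"
  assumes pushdown: "pushdown_tm n M"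
begin

abbreviation Mpow :: "nat \<Rightarrow> ('g, 's) bmat" where "Mpow \<equiv> bmat_pow ssum n M"
abbreviation Mstar :: "('g, 's) bmat" where "Mstar \<equiv> bmat_star ssum n M"

declare bmat_pow.simps [simp del]

lemma bmat_pow_0 [simp]: "Mpow 0 \<sigma> \<tau> i j = (if \<sigma> = \<tau> \<and> i = j then 1 else 0)"
  by (simp add: bmat_pow.simps bmat_one_def)

lemma pushdown_Nil: "i < n \<Longrightarrow> j < n \<Longrightarrow> M [] \<pi> i j = 0"
  using pushdown unfolding pushdown_tm_def by auto

lemma pushdown_append:
  assumes "\<rho> \<noteq> []" "i < n" "j < n"
  shows "M (\<rho> @ \<sigma>) (\<tau> @ \<sigma>) i j = M \<rho> \<tau> i j"
proof -
  obtain p \<rho>' where \<rho>: "\<rho> = p # \<rho>'" using assms(1) by (cases \<rho>) auto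
  show ?thesis
  proof (cases "\<exists>c. \<tau> = c @ \<rho>'")
    case True
    then show ?thesis using pushdown assms(2,3) unfolding pushdown_tm_def \<rho> by auto
  next
    case False
    then have "\<not> (\<exists>c. \<tau> @ \<sigma> = c @ \<rho>' @ \<sigma>)" by auto
    then show ?thesis using pushdown assms(2,3) False unfolding pushdown_tm_def \<rho> by auto
  qed
qed

lemma pushdown_not_suffix:
  assumes "\<rho> \<noteq> []" "i < n" "j < n" "\<not> (\<exists>\<tau>. \<pi> = \<tau> @ \<sigma>)"
  shows "M (\<rho> @ \<sigma>) \<pi> i j = 0"
proof -
  obtain p \<rho>' where \<rho>: "\<rho> = p # \<rho>'" using assms(1) by (cases \<rho>) auto
  have "\<not> (\<exists>c. \<pi> = c @ \<rho>' @ \<sigma>)" using assms(4) by auto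
  then show ?thesis using pushdown assms(2,3) unfolding pushdown_tm_def \<rho> by auto
qed

lemma Sum_over_row_append:
  assumes "\<rho> \<noteq> []" "i < n"
  shows "Sum_over ssum UNIV (\<lambda>\<pi>. \<Sum>k<n. M (\<rho> @ \<sigma>) \<pi> i k * g \<pi> k)
       = Sum_over ssum UNIV (\<lambda>\<tau>. \<Sum>k<n. M \<rho> \<tau> i k * g (\<tau> @ \<sigma>) k)"
proof -
  have "Sum_over ssum UNIV (\<lambda>\<pi>. \<Sum>k<n. M (\<rho> @ \<sigma>) \<pi> i k * g \<pi> k)
      = Sum_over ssum (range (\<lambda>\<tau>. \<tau> @ \<sigma>)) (\<lambda>\<pi>. \<Sum>k<n. M (\<rho> @ \<sigma>) \<pi> i k * g \<pi> k)"
    by (rule S.Sum_over_mono_neutral) (auto simp: image_iff pushdown_not_suffix[OF assms])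
  also have "\<dots> = Sum_over ssum UNIV (\<lambda>\<tau>. \<Sum>k<n. M (\<rho> @ \<sigma>) (\<tau> @ \<sigma>) i k * g (\<tau> @ \<sigma>) k)"
    by (rule S.Sum_over_reindex) (simp_all add: inj_on_def)
  finally show ?thesis by (simp add: pushdown_append[OF assms])
qed

lemma bmat_pow_Suc_Cons:
  assumes "i < n" "j < n"
  shows "Mpow (Suc m) (q # \<sigma>) \<pi> i j
       = Sum_over ssum UNIV (\<lambda>\<tau>. \<Sum>k<n. M [q] \<tau> i k * Mpow m (\<tau> @ \<sigma>) \<pi> k j)"
  using Sum_over_row_append[of "[q]" i \<sigma>] assms by (simp add: bmat_pow_Suc_left bmat_mult_eq)

lemma bmat_pow_Suc_Nil: "i < n \<Longrightarrow> j < n \<Longrightarrow> Mpow (Suc m) [] \<tau> i j = 0"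
  by (simp add: bmat_pow_Suc_left bmat_mult_eq pushdown_Nil)

lemma bmat_pow_append:
  assumes "i < n" "j < n"
  shows "Mpow m (\<sigma> @ \<pi>) [] i j = (\<Sum>a\<le>m. \<Sum>k<n. Mpow a \<sigma> [] i k * Mpow (m - a) \<pi> [] k j)"
  using assms(1)
proof (induction m arbitrary: \<sigma> i)
  case 0
  then show ?case by (cases "\<sigma> = []") (simp_all add: if_distrib[of "\<lambda>x. x * _"] cong: if_cong)
next
  case (Suc m)
  show ?case
  proof (cases \<sigma>)
    case Nil
    then show ?thesis using Suc.prems
      by (subst sum.atMost_Suc_shift) (simp add: bmat_pow_Suc_Nil if_distrib[of "\<lambda>x. x * _"] cong: if_cong)
  next
    case (Cons q \<sigma>')
    have IH: "Mpow m (\<tau> @ \<sigma>' @ \<pi>) [] k j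
        = (\<Sum>a\<le>m. \<Sum>k'<n. Mpow a (\<tau> @ \<sigma>') [] k k' * Mpow (m - a) \<pi> [] k' j)" if "k < n" for \<tau> k
      using Suc.IH[of k "\<tau> @ \<sigma>'"] that by simp
    have "Mpow (Suc m) (\<sigma> @ \<pi>) [] i j
        = Sum_over ssum UNIV (\<lambda>\<tau>. \<Sum>k<n. M [q] \<tau> i k *
            (\<Sum>a\<le>m. \<Sum>k'<n. Mpow a (\<tau> @ \<sigma>') [] k k' * Mpow (m - a) \<pi> [] k' j))"
      using Suc.prems assms(2) by (simp add: Cons bmat_pow_Suc_Cons IH)
    also have "\<dots> = (\<Sum>a\<le>m. \<Sum>k'<n. Mpow (Suc a) \<sigma> [] i k' * Mpow (m - a) \<pi> [] k' j)"
      using Suc.prems by (simp add: Sum_over_row_rearrange Cons bmat_pow_Suc_Cons)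
    also have "\<dots> = (\<Sum>a\<le>Suc m. \<Sum>k<n. Mpow a \<sigma> [] i k * Mpow (Suc m - a) \<pi> [] k j)"
      by (subst sum.atMost_Suc_shift) (simp add: Cons)
    finally show ?thesis .
  qed
qed

lemma bmat_star_eq: "Mstar \<sigma> \<tau> i j = Sum_over ssum UNIV (\<lambda>m. Mpow m \<sigma> \<tau> i j)"
  unfolding bmat_star_def by simp

lemma bmat_star_Cons: "Mstar (q # \<sigma>) [] i j = Sum_over ssum UNIV (\<lambda>m. Mpow (Suc m) (q # \<sigma>) [] i j)"
  unfolding bmat_star_eq by (subst S.Sum_over_nat_shift) (simp)

lemma bmat_star_Nil: "i < n \<Longrightarrow> j < n \<Longrightarrow> Mstar [] [] i j = (if i = j then 1 else 0)"
  unfolding bmat_star_eq by (subst S.Sum_over_nat_shift) (simp add: bmat_pow_Suc_Nil)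

lemma bmat_star_append:
  assumes "i < n" "j < n"
  shows "Mstar (\<sigma> @ \<pi>) [] i j = (\<Sum>k<n. Mstar \<sigma> [] i k * Mstar \<pi> [] k j)"
proof -
  have "Mstar (\<sigma> @ \<pi>) [] i j
      = Sum_over ssum UNIV (\<lambda>m. \<Sum>a\<le>m. \<Sum>k<n. Mpow a \<sigma> [] i k * Mpow (m - a) \<pi> [] k j)"
    unfolding bmat_star_eq using bmat_pow_append assms by simp
  also have "\<dots> = Sum_over ssum UNIV (\<lambda>a. Sum_over ssum UNIV (\<lambda>b. \<Sum>k<n. Mpow a \<sigma> [] i k * Mpow b \<pi> [] k j))"
    by (rule S.Sum_over_diagonal)
  also have "\<dots> = Sum_over ssum UNIV (\<lambda>a. \<Sum>k<n. Mpow a \<sigma> [] i k * Mstar \<pi> [] k j)"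
    by (simp add: S.Sum_over_sum bmat_star_eq Sum_over_mult_left)
  also have "\<dots> = (\<Sum>k<n. Mstar \<sigma> [] i k * Mstar \<pi> [] k j)"
    by (simp add: S.Sum_over_sum bmat_star_eq[of \<sigma>] Sum_over_mult_right)
  finally show ?thesis .
qed

lemma bmat_star_singleton:
  assumes "i < n" "j < n"
  shows "Mstar [p] [] i j = Sum_over ssum UNIV (\<lambda>\<pi>. \<Sum>k<n. M [p] \<pi> i k * Mstar \<pi> [] k j)"
proof -
  have "Mstar [p] [] i j
      = Sum_over ssum UNIV (\<lambda>m. Sum_over ssum UNIV (\<lambda>\<pi>. \<Sum>k<n. M [p] \<pi> i k * Mpow m \<pi> [] k j))"
    using assms by (simp add: bmat_star_Cons bmat_pow_Suc_Cons)
  also have "\<dots> = Sum_over ssum UNIV (\<lambda>\<pi>. \<Sum>k<n. M [p] \<pi> i k * Mstar \<pi> [] k j)"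
    by (subst S.Sum_over_swap) (simp_all add: S.Sum_over_sum bmat_star_eq Sum_over_mult_left)
  finally show ?thesis .
qed

lemma mat_listprod_star:
  "i < n \<Longrightarrow> j < n \<Longrightarrow> mat_listprod n (map (\<lambda>p. Mstar [p] []) \<pi>) i j = Mstar \<pi> [] i j"
proof (induction \<pi> arbitrary: i)
  case (Cons p \<pi>)
  then show ?case
    using bmat_star_append[of i j "[p]" \<pi>] by (simp add: mat_listprod_def mat_mult_def)
qed (simp add: mat_listprod_def mat_one_def bmat_star_Nil)

end

section \<open>Infinite runs\<close>

lemma Pl_case_nat_iff: "case_nat k js \<in> Pl n l \<longleftrightarrow> k < n \<and> js \<in> Pl n l"
proof -
  have bounded: "(\<forall>t. case_nat k js t < n) \<longleftrightarrow> k < n \<and> (\<forall>t. js t < n)"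
    by (metis nat.case old.nat.exhaust)
  have "{t. case_nat k js t < l} \<subseteq> insert 0 (Suc ` {t. js t < l})"
  proof
    fix t assume "t \<in> {t. case_nat k js t < l}"
    then show "t \<in> insert 0 (Suc ` {t. js t < l})" by (cases t) auto
  qed
  moreover have "Suc ` {t. js t < l} \<subseteq> {t. case_nat k js t < l}" by auto
  ultimately have "finite {t. case_nat k js t < l} \<longleftrightarrow> finite {t. js t < l}"
    by (metis finite_imageI finite_insert finite_subset finite_image_iff inj_Suc inj_on_subset subset_UNIV)
  then show ?thesis using bounded unfolding Pl_def by auto
qed

definition run_cons :: "'a \<times> 'b \<Rightarrow> (nat \<Rightarrow> 'a) \<times> (nat \<Rightarrow> 'b) \<Rightarrow> (nat \<Rightarrow> 'a) \<times> (nat \<Rightarrow> 'b)" where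
  "run_cons y x = (case_nat (fst y) (fst x), case_nat (snd y) (snd x))"

lemma run_cons_eq_iff: "run_cons y x = run_cons y' x' \<longleftrightarrow> y = y' \<and> x = x'"
proof
  assume eq: "run_cons y x = run_cons y' x'"
  have "fst (run_cons y x) t = fst (run_cons y' x') t" "snd (run_cons y x) t = snd (run_cons y' x') t" for t
    using eq by simp_all
  from this[of 0] this[of "Suc _"] show "y = y' \<and> x = x'"
    by (simp add: run_cons_def prod_eq_iff fun_eq_iff)
qed simp

lemma run_cons_decompose: "run_cons (fst x 0, snd x 0) (\<lambda>t. fst x (Suc t), \<lambda>t. snd x (Suc t)) = x"
  by (simp add: run_cons_def prod_eq_iff fun_eq_iff split: nat.split)

lemma runs_UN_run_cons:
  "{x \<in> Q. snd x \<in> Pl n l}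
   = (\<Union>y\<in>UNIV \<times> {..<n}. run_cons y ` {x. run_cons y x \<in> Q \<and> snd x \<in> Pl n l})"
proof (intro set_eqI iffI)
  fix x assume x: "x \<in> {x \<in> Q. snd x \<in> Pl n l}"
  let ?y = "(fst x 0, snd x 0)" and ?x = "(\<lambda>t. fst x (Suc t), \<lambda>t. snd x (Suc t))"
  have "snd (run_cons ?y ?x) \<in> Pl n l" using x by (simp add: run_cons_decompose)
  then have "?y \<in> UNIV \<times> {..<n}" "snd ?x \<in> Pl n l" by (simp_all add: run_cons_def Pl_case_nat_iff)
  then show "x \<in> (\<Union>y\<in>UNIV \<times> {..<n}. run_cons y ` {x. run_cons y x \<in> Q \<and> snd x \<in> Pl n l})"
    by (intro UN_I[of ?y] image_eqI[of x "run_cons ?y" ?x]) (use x run_cons_decompose[of x] in auto)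
qed (auto simp: run_cons_def Pl_case_nat_iff)

definition first_hit :: "'a \<Rightarrow> nat \<Rightarrow> ((nat \<Rightarrow> 'a) \<times> 'b) set" where
  "first_hit \<beta> m = {x. fst x m = \<beta> \<and> (\<forall>t<m. fst x t \<noteq> \<beta>)}"

definition never_hits :: "'a \<Rightarrow> ((nat \<Rightarrow> 'a) \<times> 'b) set" where
  "never_hits \<beta> = {x. \<forall>t. fst x t \<noteq> \<beta>}"

lemma UNIV_first_hit_never_hits:
  "UNIV = (\<Union>w. case w of None \<Rightarrow> never_hits \<beta> | Some m \<Rightarrow> first_hit \<beta> m)"
proof -
  have "x \<in> (case if \<exists>t. fst x t = \<beta> then Some (LEAST t. fst x t = \<beta>) else None of
      None \<Rightarrow> never_hits \<beta> | Some m \<Rightarrow> first_hit \<beta> m)" for x :: "(nat \<Rightarrow> 'a) \<times> 'b"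
    by (auto simp: never_hits_def first_hit_def intro: LeastI dest: not_less_Least)
  then show ?thesis by blast
qed

lemma first_hit_never_hits_disjoint:
  "w \<noteq> w' \<Longrightarrow>
   (case w of None \<Rightarrow> never_hits \<beta> | Some m \<Rightarrow> first_hit \<beta> m)
   \<inter> (case w' of None \<Rightarrow> never_hits \<beta> | Some m \<Rightarrow> first_hit \<beta> m) = {}"
  by (cases w; cases w') (auto simp: first_hit_def never_hits_def dest: linorder_neqE_nat)

definition lift_run :: "'a list \<Rightarrow> (nat \<Rightarrow> 'a list) \<times> 'b \<Rightarrow> (nat \<Rightarrow> 'a list) \<times> 'b" where
  "lift_run \<sigma> x = (\<lambda>t. fst x t @ \<sigma>, snd x)"

lemma inj_lift_run: "inj (lift_run \<sigma>)"
  by (auto simp: inj_on_def lift_run_def fun_eq_iff prod_eq_iff)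

lemma lift_run_image_iff:
  "x \<in> lift_run \<sigma> ` {x. \<forall>t. fst x t \<noteq> []} \<longleftrightarrow> (\<forall>t. \<exists>\<rho>. \<rho> \<noteq> [] \<and> fst x t = \<rho> @ \<sigma>)"
proof
  assume "\<forall>t. \<exists>\<rho>. \<rho> \<noteq> [] \<and> fst x t = \<rho> @ \<sigma>"
  then obtain f where f: "\<And>t. f t \<noteq> [] \<and> fst x t = f t @ \<sigma>" by metis
  then have "x = lift_run \<sigma> (f, snd x)" by (simp add: lift_run_def prod_eq_iff fun_eq_iff)
  then show "x \<in> lift_run \<sigma> ` {x. \<forall>t. fst x t \<noteq> []}" using f by auto
qed (auto simp: lift_run_def)

context pushdown_matrix
begin

text \<open>A run from the configuration (\<alpha>, i) is the pair x of the sequences of stacks \<pi>_1, \<pi>_2, ...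
  and states j_1, j_2, ..., indexed from 0.  Its weight is the infinite product in the definition
  of M^(\<omega>,l), and omega_on l Q \<alpha> i is the part of ((M^(\<omega>,l))_\<alpha>)_i contributed by the runs
  in Q.\<close>

definition path_weight :: "'g list \<Rightarrow> nat \<Rightarrow> (nat \<Rightarrow> 'g list) \<times> (nat \<Rightarrow> nat) \<Rightarrow> 'v" where
  "path_weight \<alpha> i x = omega (\<lambda>t. M (case_nat \<alpha> (fst x) t) (fst x t) (case_nat i (snd x) t) (snd x t))"

definition omega_on :: "nat \<Rightarrow> ((nat \<Rightarrow> 'g list) \<times> (nat \<Rightarrow> nat)) set \<Rightarrow> 'g list \<Rightarrow> nat \<Rightarrow> 'v" where
  "omega_on l Q \<alpha> i = Sum_over vsum {x \<in> Q. snd x \<in> Pl n l} (path_weight \<alpha> i)"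

abbreviation Momega :: "nat \<Rightarrow> 'g list \<Rightarrow> nat \<Rightarrow> 'v" where
  "Momega l \<equiv> bmat_omega vsum omega n l M"

lemma bmat_omega_eq_omega_on: "Momega l \<alpha> i = omega_on l UNIV \<alpha> i"
proof -
  have "omega_on l UNIV \<alpha> i = Sum_over vsum (UNIV \<times> Pl n l) (path_weight \<alpha> i)"
    unfolding omega_on_def by (rule arg_cong2[where f = "Sum_over vsum"]) auto
  also have "\<dots> = Momega l \<alpha> i"
    by (simp add: V.Sum_over_Sigma bmat_omega_def path_weight_def cong: nat.case_cong)
  finally show ?thesis ..
qed

lemma path_weight_run_cons:
  "path_weight \<alpha> i (run_cons (\<pi>, k) x) = smult (M \<alpha> \<pi> i k) (path_weight \<pi> k x)"
  unfolding path_weight_def run_cons_def by (subst omega_unfold) simp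

lemma omega_on_empty [simp]: "omega_on l {} \<alpha> i = 0"
  by (simp add: omega_on_def)

lemma omega_on_UN_disjoint:
  assumes "indexable J" "\<And>j j'. j \<in> J \<Longrightarrow> j' \<in> J \<Longrightarrow> j \<noteq> j' \<Longrightarrow> Q j \<inter> Q j' = {}"
  shows "omega_on l (\<Union>j\<in>J. Q j) \<alpha> i = Sum_over vsum J (\<lambda>j. omega_on l (Q j) \<alpha> i)"
proof -
  have "{x \<in> (\<Union>j\<in>J. Q j). snd x \<in> Pl n l} = (\<Union>j\<in>J. {x \<in> Q j. snd x \<in> Pl n l})" by auto
  then show ?thesis
    unfolding omega_on_def by (simp only:) (rule V.Sum_over_UN_disjoint; use assms in auto)
qed

lemma omega_on_first_step:
  "omega_on l Q \<alpha> i
   = Sum_over vsum UNIV (\<lambda>\<pi>. \<Sum>k<n. smult (M \<alpha> \<pi> i k) (omega_on l {x. run_cons (\<pi>, k) x \<in> Q} \<pi> k))"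
proof -
  define D where "D y = {x. run_cons y x \<in> Q \<and> snd x \<in> Pl n l}" for y
  have "omega_on l Q \<alpha> i = Sum_over vsum (\<Union>y\<in>UNIV \<times> {..<n}. run_cons y ` D y) (path_weight \<alpha> i)"
    unfolding omega_on_def D_def by (subst runs_UN_run_cons) (rule refl)
  also have "\<dots> = Sum_over vsum (UNIV \<times> {..<n}) (\<lambda>y. Sum_over vsum (run_cons y ` D y) (path_weight \<alpha> i))"
    by (rule V.Sum_over_UN_disjoint) (auto simp: run_cons_eq_iff)
  also have "\<dots> = Sum_over vsum (UNIV \<times> {..<n}) (\<lambda>y. Sum_over vsum (D y) (\<lambda>x. path_weight \<alpha> i (run_cons y x)))"
    by (intro V.Sum_over_cong V.Sum_over_reindex) (auto simp: inj_on_def run_cons_eq_iff)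
  also have "\<dots> = Sum_over vsum UNIV (\<lambda>\<pi>. \<Sum>k<n. smult (M \<alpha> \<pi> i k) (Sum_over vsum (D (\<pi>, k)) (path_weight \<pi> k)))"
    by (simp add: V.Sum_over_Sigma V.Sum_over_finite path_weight_run_cons smult_Sum_over_right)
  finally show ?thesis by (simp add: omega_on_def D_def)
qed

lemma omega_on_split_first_hit:
  "omega_on l UNIV \<alpha> i = Sum_over vsum UNIV (\<lambda>m. omega_on l (first_hit \<beta> m) \<alpha> i) + omega_on l (never_hits \<beta>) \<alpha> i"
proof -
  have "omega_on l UNIV \<alpha> i
      = Sum_over vsum UNIV (\<lambda>w. omega_on l (case w of None \<Rightarrow> never_hits \<beta> | Some m \<Rightarrow> first_hit \<beta> m) \<alpha> i)"
    by (subst UNIV_first_hit_never_hits[of \<beta>], rule omega_on_UN_disjoint)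
      (simp_all add: first_hit_never_hits_disjoint)
  then show ?thesis by (simp add: V.Sum_over_option add.commute)
qed

lemma omega_on_first_hit_0:
  "omega_on l (first_hit \<beta> 0) \<alpha> i = (\<Sum>k<n. smult (M \<alpha> \<beta> i k) (omega_on l UNIV \<beta> k))"
proof -
  have "{x. run_cons (\<pi>, k) x \<in> first_hit \<beta> 0} = (if \<pi> = \<beta> then UNIV else {})" for \<pi> and k :: nat
    by (auto simp: first_hit_def run_cons_def)
  then have "omega_on l (first_hit \<beta> 0) \<alpha> i
      = Sum_over vsum UNIV (\<lambda>\<pi>. \<Sum>k<n. smult (M \<alpha> \<pi> i k) (omega_on l (if \<pi> = \<beta> then UNIV else {}) \<pi> k))"
    by (subst omega_on_first_step) (simp only:)
  also have "\<dots> = Sum_over vsum {\<beta>} (\<lambda>\<pi>. \<Sum>k<n. smult (M \<alpha> \<pi> i k) (omega_on l (if \<pi> = \<beta> then UNIV else {}) \<pi> k))"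
    by (rule V.Sum_over_mono_neutral) (auto simp: smult_zero_right)
  finally show ?thesis by simp
qed

lemma omega_on_first_hit_Suc:
  "omega_on l (first_hit \<beta> (Suc m)) \<alpha> i
   = Sum_over vsum {\<pi>. \<pi> \<noteq> \<beta>} (\<lambda>\<pi>. \<Sum>k<n. smult (M \<alpha> \<pi> i k) (omega_on l (first_hit \<beta> m) \<pi> k))"
proof -
  have "{x. run_cons (\<pi>, k) x \<in> first_hit \<beta> (Suc m)} = (if \<pi> = \<beta> then {} else first_hit \<beta> m)" for \<pi> and k :: nat
    by (auto simp: first_hit_def run_cons_def less_Suc_eq_0_disj)
  then have "omega_on l (first_hit \<beta> (Suc m)) \<alpha> i
      = Sum_over vsum UNIV (\<lambda>\<pi>. \<Sum>k<n. smult (M \<alpha> \<pi> i k) (omega_on l (if \<pi> = \<beta> then {} else first_hit \<beta> m) \<pi> k))"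
    by (subst omega_on_first_step) (simp only:)
  also have "\<dots> = Sum_over vsum {\<pi>. \<pi> \<noteq> \<beta>} (\<lambda>\<pi>. \<Sum>k<n. smult (M \<alpha> \<pi> i k) (omega_on l (if \<pi> = \<beta> then {} else first_hit \<beta> m) \<pi> k))"
    by (rule V.Sum_over_mono_neutral) (auto simp: smult_zero_right)
  finally show ?thesis by (auto intro: V.Sum_over_cong)
qed

lemma omega_on_first_hit_Suc_append:
  assumes "\<rho> \<noteq> []" "i < n"
  shows "omega_on l (first_hit \<sigma> (Suc m)) (\<rho> @ \<sigma>) i
       = Sum_over vsum {\<tau>. \<tau> \<noteq> []} (\<lambda>\<tau>. \<Sum>k<n. smult (M \<rho> \<tau> i k) (omega_on l (first_hit \<sigma> m) (\<tau> @ \<sigma>) k))"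
proof -
  let ?f = "\<lambda>\<pi>. \<Sum>k<n. smult (M (\<rho> @ \<sigma>) \<pi> i k) (omega_on l (first_hit \<sigma> m) \<pi> k)"
  have "(\<lambda>\<tau>. \<tau> @ \<sigma>) ` {\<tau>. \<tau> \<noteq> []} \<subseteq> {\<pi>. \<pi> \<noteq> \<sigma>}" by auto
  moreover have "M (\<rho> @ \<sigma>) \<pi> i k = 0"
    if "\<pi> \<noteq> \<sigma>" "\<pi> \<notin> (\<lambda>\<tau>. \<tau> @ \<sigma>) ` {\<tau>. \<tau> \<noteq> []}" "k < n" for \<pi> k
    using that assms by (intro pushdown_not_suffix) auto
  ultimately have "omega_on l (first_hit \<sigma> (Suc m)) (\<rho> @ \<sigma>) i
      = Sum_over vsum ((\<lambda>\<tau>. \<tau> @ \<sigma>) ` {\<tau>. \<tau> \<noteq> []}) ?f"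
    unfolding omega_on_first_hit_Suc
    by (intro V.Sum_over_mono_neutral) (auto simp: smult_zero_left intro!: sum.neutral)
  also have "\<dots> = Sum_over vsum {\<tau>. \<tau> \<noteq> []} (\<lambda>\<tau>. ?f (\<tau> @ \<sigma>))"
    by (rule V.Sum_over_reindex) (simp_all add: inj_on_def)
  finally show ?thesis using assms by (simp add: pushdown_append)
qed

lemma omega_on_first_hit_append:
  assumes "\<rho> \<noteq> []" "i < n"
  shows "omega_on l (first_hit \<sigma> m) (\<rho> @ \<sigma>) i
       = (\<Sum>k<n. smult (Mpow (Suc m) \<rho> [] i k) (omega_on l UNIV \<sigma> k))"
  using assms
proof (induction m arbitrary: \<rho> i)
  case 0
  then show ?case
    by (simp add: omega_on_first_hit_0 pushdown_append[where \<tau> = "[]", simplified]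
        bmat_pow_Suc_left bmat_pow.simps(1) bmat_mult_one_right)
next
  case (Suc m)
  let ?\<omega> = "omega_on l UNIV \<sigma>"
  have "omega_on l (first_hit \<sigma> (Suc m)) (\<rho> @ \<sigma>) i
      = Sum_over vsum {\<tau>. \<tau> \<noteq> []} (\<lambda>\<tau>. \<Sum>k<n. smult (M \<rho> \<tau> i k)
          (\<Sum>k'<n. smult (Mpow (Suc m) \<tau> [] k k') (?\<omega> k')))"
    unfolding omega_on_first_hit_Suc_append[OF Suc.prems]
    using Suc.IH by (intro V.Sum_over_cong sum.cong refl arg_cong2[where f = smult]) simp_all
  also have "\<dots> = Sum_over vsum UNIV (\<lambda>\<tau>. \<Sum>k<n. smult (M \<rho> \<tau> i k)
          (\<Sum>k'<n. smult (Mpow (Suc m) \<tau> [] k k') (?\<omega> k')))"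
    by (rule V.Sum_over_mono_neutral[symmetric])
      (auto simp: bmat_pow_Suc_Nil smult_zero_left smult_zero_right intro!: sum.neutral)
  also have "\<dots> = (\<Sum>k'<n. smult (Sum_over ssum UNIV (\<lambda>\<tau>. \<Sum>k<n. M \<rho> \<tau> i k * Mpow (Suc m) \<tau> [] k k')) (?\<omega> k'))"
    by (rule Sum_over_vec_rearrange) simp
  also have "\<dots> = (\<Sum>k'<n. smult (Mpow (Suc (Suc m)) \<rho> [] i k') (?\<omega> k'))"
    using Suc.prems by (intro sum.cong refl) (simp add: bmat_pow_Suc_left[of i] bmat_mult_eq)
  finally show ?case .
qed

lemma path_weight_Nil_stack:
  assumes "snd x \<in> Pl n l" "fst x t = []"
  shows "path_weight \<alpha> i x = 0"
  unfolding path_weight_def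
  by (rule omega_zero[of _ "Suc t"]) (use assms in \<open>simp add: Pl_def pushdown_Nil\<close>)

lemma path_weight_lift_run:
  assumes "\<rho> \<noteq> []" "i < n" "snd x \<in> Pl n l" "\<forall>t. fst x t \<noteq> []"
  shows "path_weight (\<rho> @ \<sigma>) i (lift_run \<sigma> x) = path_weight \<rho> i x"
proof -
  have "case_nat (\<rho> @ \<sigma>) (\<lambda>t. fst x t @ \<sigma>) t = case_nat \<rho> (fst x) t @ \<sigma>"
    "case_nat \<rho> (fst x) t \<noteq> []" "case_nat i (snd x) t < n" "snd x t < n" for t
    using assms by (auto simp: Pl_def split: nat.split)
  then show ?thesis
    unfolding path_weight_def lift_run_def by (simp add: pushdown_append cong: nat.case_cong)
qed

lemma path_weight_leaving_suffix:
  assumes "\<rho> \<noteq> []" "i < n" "snd x \<in> Pl n l" "x \<in> never_hits \<sigma>"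
    and "x \<notin> lift_run \<sigma> ` {x. \<forall>t. fst x t \<noteq> []}"
  shows "path_weight (\<rho> @ \<sigma>) i x = 0"
proof -
  define above where "above t \<longleftrightarrow> (\<exists>\<rho>'. \<rho>' \<noteq> [] \<and> fst x t = \<rho>' @ \<sigma>)" for t
  have "\<exists>t. \<not> above t" using assms(5) by (simp add: lift_run_image_iff above_def)
  define t0 where "t0 = (LEAST t. \<not> above t)"
  have not_above: "\<not> above t0" unfolding t0_def using \<open>\<exists>t. \<not> above t\<close> by (rule LeastI_ex)
  obtain \<rho>' where \<rho>': "\<rho>' \<noteq> []" "case_nat (\<rho> @ \<sigma>) (fst x) t0 = \<rho>' @ \<sigma>"
  proof (cases t0)
    case (Suc t1)
    then have "above t1" unfolding t0_def by (metis lessI not_less_Least)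
    then show ?thesis using that Suc by (auto simp: above_def)
  qed (use that assms(1) in simp)
  have "\<not> (\<exists>\<tau>. fst x t0 = \<tau> @ \<sigma>)"
  proof
    assume "\<exists>\<tau>. fst x t0 = \<tau> @ \<sigma>"
    then obtain \<tau> where "fst x t0 = \<tau> @ \<sigma>" by blast
    moreover have "fst x t0 \<noteq> \<sigma>" using assms(4) by (simp add: never_hits_def)
    ultimately show False using not_above by (auto simp: above_def)
  qed
  moreover have "case_nat i (snd x) t0 < n" "snd x t0 < n"
    using assms(2,3) by (auto simp: Pl_def split: nat.split)
  ultimately show ?thesis
    unfolding path_weight_def by (intro omega_zero[of _ t0]) (simp add: \<rho>' pushdown_not_suffix)
qed

lemma omega_on_never_hits:
  assumes "\<rho> \<noteq> []" "i < n"
  shows "omega_on l (never_hits \<sigma>) (\<rho> @ \<sigma>) i = omega_on l UNIV \<rho> i"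
proof -
  define D :: "((nat \<Rightarrow> 'g list) \<times> (nat \<Rightarrow> nat)) set"
    where "D = {x. (\<forall>t. fst x t \<noteq> []) \<and> snd x \<in> Pl n l}"
  have "omega_on l UNIV \<rho> i = Sum_over vsum D (path_weight \<rho> i)"
    unfolding omega_on_def D_def
    by (rule V.Sum_over_mono_neutral) (auto intro: path_weight_Nil_stack)
  also have "\<dots> = Sum_over vsum D (\<lambda>x. path_weight (\<rho> @ \<sigma>) i (lift_run \<sigma> x))"
    using assms by (intro V.Sum_over_cong) (auto simp: D_def path_weight_lift_run)
  also have "\<dots> = Sum_over vsum (lift_run \<sigma> ` D) (path_weight (\<rho> @ \<sigma>) i)"
    by (rule V.Sum_over_reindex[symmetric]) (simp_all add: inj_on_subset[OF inj_lift_run])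
  also have "\<dots> = omega_on l (never_hits \<sigma>) (\<rho> @ \<sigma>) i"
    unfolding omega_on_def
  proof (rule V.Sum_over_mono_neutral[symmetric])
    show "lift_run \<sigma> ` D \<subseteq> {x \<in> never_hits \<sigma>. snd x \<in> Pl n l}"
      by (auto simp: D_def lift_run_def never_hits_def)
  next
    fix x assume x: "x \<in> {x \<in> never_hits \<sigma>. snd x \<in> Pl n l}" "x \<notin> lift_run \<sigma> ` D"
    then have "x \<notin> lift_run \<sigma> ` {x. \<forall>t. fst x t \<noteq> []}" by (auto simp: D_def lift_run_def)
    with x show "path_weight (\<rho> @ \<sigma>) i x = 0" by (intro path_weight_leaving_suffix[OF assms]) auto
  qed simp
  finally show ?thesis ..
qed

lemma Momega_append:
  assumes "\<rho> \<noteq> []" "i < n"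
  shows "Momega l (\<rho> @ \<sigma>) i = Momega l \<rho> i + (\<Sum>k<n. smult (Mstar \<rho> [] i k) (Momega l \<sigma> k))"
proof -
  have "Momega l (\<rho> @ \<sigma>) i
      = Sum_over vsum UNIV (\<lambda>m. \<Sum>k<n. smult (Mpow (Suc m) \<rho> [] i k) (Momega l \<sigma> k)) + Momega l \<rho> i"
    using assms omega_on_split_first_hit[of l "\<rho> @ \<sigma>" i \<sigma>]
    by (simp add: bmat_omega_eq_omega_on omega_on_first_hit_append omega_on_never_hits)
  also have "\<dots> = (\<Sum>k<n. smult (Mstar \<rho> [] i k) (Momega l \<sigma> k)) + Momega l \<rho> i"
  proof -
    obtain q \<rho>' where "\<rho> = q # \<rho>'" using assms(1) by (cases \<rho>) auto
    then show ?thesis by (simp add: V.Sum_over_sum bmat_star_Cons smult_Sum_over_left)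
  qed
  finally show ?thesis by (simp add: add.commute)
qed

lemma Momega_first_step:
  "Momega l \<alpha> i = Sum_over vsum UNIV (\<lambda>\<pi>. \<Sum>k<n. smult (M \<alpha> \<pi> i k) (Momega l \<pi> k))"
  unfolding bmat_omega_eq_omega_on by (subst omega_on_first_step) simp

lemma Momega_Nil: "i < n \<Longrightarrow> Momega l [] i = 0"
  by (subst Momega_first_step) (simp add: pushdown_Nil smult_zero_left)

lemma Momega_word:
  assumes "i < n"
  shows "Momega l \<pi> i = (\<Sum>j<length \<pi>. mat_vec smult n (mat_listprod n (map (\<lambda>p. Mstar [p] []) (take j \<pi>)))
                              (Momega l [\<pi> ! j]) i)"
  using assms
proof (induction \<pi> arbitrary: i)
  case (Cons q \<sigma>)
  let ?x = "\<lambda>\<rho>. mat_listprod n (map (\<lambda>p. Mstar [p] []) \<rho>)"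
  have "Momega l (q # \<sigma>) i = Momega l [q] i + (\<Sum>k<n. smult (Mstar [q] [] i k) (Momega l \<sigma> k))"
    using Momega_append[of "[q]" i l \<sigma>] Cons.prems by simp
  also have "(\<Sum>k<n. smult (Mstar [q] [] i k) (Momega l \<sigma> k))
      = (\<Sum>k<n. \<Sum>j<length \<sigma>. smult (Mstar [q] [] i k) (mat_vec smult n (?x (take j \<sigma>)) (Momega l [\<sigma> ! j]) k))"
    by (simp add: Cons.IH smult_sum_right)
  also have "\<dots> = (\<Sum>j<length \<sigma>. mat_vec smult n (?x (take (Suc j) (q # \<sigma>))) (Momega l [(q # \<sigma>) ! Suc j]) i)"
    by (subst sum.swap) (simp add: mat_listprod_def mat_vec_mult)
  also have "Momega l [q] i = mat_vec smult n (?x (take 0 (q # \<sigma>))) (Momega l [(q # \<sigma>) ! 0]) i"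
    using Cons.prems by (simp add: mat_listprod_def mat_vec_one)
  finally show ?case by (simp only: length_Cons sum.lessThan_Suc_shift)
qed (simp add: Momega_Nil)

end

theorem corollary9:
  fixes ssum :: "idx set \<Rightarrow> (idx \<Rightarrow> 's::semiring_1) \<Rightarrow> 's"
    and vsum :: "idx set \<Rightarrow> (idx \<Rightarrow> 'v::comm_monoid_add) \<Rightarrow> 'v"
    and smult :: "'s \<Rightarrow> 'v \<Rightarrow> 'v"
    and omega :: "(nat \<Rightarrow> 's) \<Rightarrow> 'v"
    and S' :: "'s set"
    and n l :: nat
    and M :: "('g::finite, 's) bmat"
  assumes "complete_ss_pair ssum vsum smult omega"
    and "0 \<in> S'" and "1 \<in> S'"
    and "1 \<le> n"
    and "\<forall>\<pi>1 \<pi>2 i j. i < n \<longrightarrow> j < n \<longrightarrow> M \<pi>1 \<pi>2 i j \<in> S'"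
    and "pushdown_tm n M"
    and "l \<le> n"
  shows "let x = (\<lambda>p. bmat_star ssum n M [p] []);
             xw = (\<lambda>\<pi>. mat_listprod n (map x \<pi>));
             z = (\<lambda>p. bmat_omega vsum omega n l M [p])
         in \<forall>p.
              (\<forall>i<n. \<forall>j<n. x p i j = Sum_over ssum UNIV (\<lambda>\<pi>. mat_mult n (M [p] \<pi>) (xw \<pi>) i j)) \<and>
              (\<forall>i<n. z p i =
                 Sum_over vsum {\<pi>. \<pi> \<noteq> []} (\<lambda>\<pi>.
                   mat_vec smult n (M [p] \<pi>)
                     (\<lambda>i'. \<Sum>j<length \<pi>. mat_vec smult n (xw (take j \<pi>)) (z (\<pi> ! j)) i') i))"
proof -
  interpret pushdown_matrix ssum vsum smult omega n M
    using assms(1,6) by (simp add: pushdown_matrix_def pushdown_matrix_axioms_def)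
  let ?xw = "\<lambda>\<pi>. mat_listprod n (map (\<lambda>p. Mstar [p] []) \<pi>)"
  have x: "Mstar [p] [] i j = Sum_over ssum UNIV (\<lambda>\<pi>. mat_mult n (M [p] \<pi>) (?xw \<pi>) i j)"
    if "i < n" "j < n" for p i j
    using that by (simp add: bmat_star_singleton mat_mult_def mat_listprod_star)
  have z: "Momega l [p] i = Sum_over vsum {\<pi>. \<pi> \<noteq> []} (\<lambda>\<pi>. mat_vec smult n (M [p] \<pi>)
      (\<lambda>i'. \<Sum>j<length \<pi>. mat_vec smult n (?xw (take j \<pi>)) (Momega l [\<pi> ! j]) i') i)"
    if "i < n" for p i
  proof -
    have "Momega l [p] i = Sum_over vsum {\<pi>. \<pi> \<noteq> []} (\<lambda>\<pi>. \<Sum>k<n. smult (M [p] \<pi> i k) (Momega l \<pi> k))"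
      by (subst Momega_first_step, rule V.Sum_over_mono_neutral)
        (auto simp: Momega_Nil smult_zero_right intro!: sum.neutral)
    also have "\<dots> = Sum_over vsum {\<pi>. \<pi> \<noteq> []} (\<lambda>\<pi>. mat_vec smult n (M [p] \<pi>)
        (\<lambda>i'. \<Sum>j<length \<pi>. mat_vec smult n (?xw (take j \<pi>)) (Momega l [\<pi> ! j]) i') i)"
      unfolding mat_vec_def[of smult n "M [p] _"]
      by (intro V.Sum_over_cong sum.cong refl arg_cong2[where f = smult] Momega_word) simp
    finally show ?thesis .
  qed
  show ?thesis unfolding Let_def using x z by simp
qed

end
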